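(* Let $A=(i_1,\dots,i_a)$ be an ordered tuple of distinct elements of $I_d$ and $r\ge0$ with $(a-1)l+r$ even. Let $\overrightarrow{A}=(i_a,i_1,\dots,i_{a-1})$. Then $\overrightarrow{A}^{(r)}=A^{(r)}$ in $\mathcal{G}$.
   Context: Fix a commutative ring $R$ and integers $l,d\ge1$; $I_a=\{1,\dots,a\}$. Let $\mathcal{G}$ be the $R$-superalgebra that is free as an $R$-module with basis $\{x_1^{m_1}\cdots x_d^{m_d}\,w\,c_1^{e_1}\cdots c_d^{e_d}: 0\le m_i\le l-1,\ w\in\Sigma_d,\ e_i\in\{0,1\}\}$, with multiplication determined by: the $x_i$ commute and $x_i^l=0$; $w\in\Sigma_d$ multiply as in the symmetric group (composition right to left); $c_i^2=1$, $c_ic_j=-c_jc_i$ for $i\ne j$; $wx_i=x_{w(i)}w$, $wc_i=c_{w(i)}w$; $x_ic_i=-c_ix_i$, $x_ic_j=c_jx_i$ for $i\ne j$ (this is $\operatorname{gr}$ of a level-$l$ cyclotomic Sergeev superalgebra). For an ordered tuple $A=(i_1,\dots,i_a)$ of distinct elements of $I_d$, $\sigma_A$ is the cycle $i_1\mapsto i_2\mapsto\dots\mapsto i_a\mapsto i_1$. For $\alpha\in\mathbb{Z}_2^a$: $|\alpha|=\sum_j\alpha_j$; $\mathbb{Z}_2^{a,\mathrm{ev}}$ is the set of $\alpha$ with $|\alpha|$ even; $c_\alpha(A)=c_{i_1}^{\alpha_1}\cdots c_{i_a}^{\alpha_a}$; $\epsilon^\alpha_j=\prod_{k<j}(-1)^{\alpha_k}$.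 For $r\ge0$, $\alpha\in\mathbb{Z}_2^{a,\mathrm{ev}}$: $h^\alpha_r(A)=\sum_{r_1+\dots+r_a=(a-1)(l-1)+r,\ r_j\ge0}\prod_j(\epsilon^\alpha_jx_{i_j})^{r_j}$, $A^{(r,\alpha)}=h^\alpha_r(A)\sigma_Ac_\alpha(A)$, $\tau_\alpha=(-1)^{|\alpha|/2+\sum_j j\alpha_j}$, and $A^{(r)}=\sum_{\alpha\in\mathbb{Z}_2^{a,\mathrm{ev}}}\tau_\alpha A^{(r,\alpha)}$. *)

theory Defs
  imports Main "HOL-Combinatorics.Cycles"
begin

text \<open>Defining relations of gr of the level-l cyclotomic Sergeev superalgebra, on generators
  x i (i in I_d), s w (w a permutation of I_d) and c i (i in I_d), inside a ring 'a.
  The algebra G of the paper is the algebra presented by these relations (free with the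
  PBW basis x^m w c^e), so an identity between integral combinations of these generators
  holds in G iff it holds in every ring with elements satisfying these relations.\<close>

definition sergeev_rels ::
  "nat \<Rightarrow> nat \<Rightarrow> (nat \<Rightarrow> 'a::ring_1) \<Rightarrow> ((nat \<Rightarrow> nat) \<Rightarrow> 'a) \<Rightarrow> (nat \<Rightarrow> 'a) \<Rightarrow> bool" where
  "sergeev_rels l d x s c \<longleftrightarrow>
     (\<forall>i\<in>{1..d}. \<forall>j\<in>{1..d}. x i * x j = x j * x i) \<and>
     (\<forall>i\<in>{1..d}. x i ^ l = 0) \<and>
     s id = 1 \<and>
     (\<forall>w v. w permutes {1..d} \<longrightarrow> v permutes {1..d} \<longrightarrow> s (w \<circ> v) = s w * s v) \<and>
     (\<forall>i\<in>{1..d}. c i * c i = 1) \<and>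
     (\<forall>i\<in>{1..d}. \<forall>j\<in>{1..d}. i \<noteq> j \<longrightarrow> c i * c j = - (c j * c i)) \<and>
     (\<forall>w i. w permutes {1..d} \<longrightarrow> i \<in> {1..d} \<longrightarrow> s w * x i = x (w i) * s w) \<and>
     (\<forall>w i. w permutes {1..d} \<longrightarrow> i \<in> {1..d} \<longrightarrow> s w * c i = c (w i) * s w) \<and>
     (\<forall>i\<in>{1..d}. x i * c i = - (c i * x i)) \<and>
     (\<forall>i\<in>{1..d}. \<forall>j\<in>{1..d}. i \<noteq> j \<longrightarrow> x i * c j = c j * x i)"

text \<open>Elements alpha of Z_2^a are boolean lists of length a (True = 1); positions are 0-based
  in the lists, 1-based in the paper.\<close>

definition wt :: "bool list \<Rightarrow> nat" where
  "wt \<alpha> = length (filter id \<alpha>)"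

definition even_alphas :: "nat \<Rightarrow> bool list set" where
  "even_alphas a = {\<alpha>. length \<alpha> = a \<and> even (wt \<alpha>)}"

text \<open>epsilon^alpha_j for the paper index j = jj+1: product over k < j of (-1)^alpha_k.\<close>
definition eps :: "bool list \<Rightarrow> nat \<Rightarrow> int" where
  "eps \<alpha> jj = (-1) ^ wt (take jj \<alpha>)"

definition h_elt :: "nat \<Rightarrow> (nat \<Rightarrow> 'a::ring_1) \<Rightarrow> nat list \<Rightarrow> nat \<Rightarrow> bool list \<Rightarrow> 'a" where
  "h_elt l x A r \<alpha> =
     (\<Sum>rs\<in>{rs. length rs = length A \<and> sum_list rs = (length A - 1) * (l - 1) + r}.
        prod_list (map (\<lambda>jj. (of_int (eps \<alpha> jj) * x (A ! jj)) ^ (rs ! jj)) [0..<length A]))"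

definition c_alpha :: "(nat \<Rightarrow> 'a::ring_1) \<Rightarrow> nat list \<Rightarrow> bool list \<Rightarrow> 'a" where
  "c_alpha c A \<alpha> = prod_list (map (\<lambda>jj. if \<alpha> ! jj then c (A ! jj) else 1) [0..<length A])"

definition tau :: "bool list \<Rightarrow> int" where
  "tau \<alpha> = (-1) ^ (wt \<alpha> div 2 + (\<Sum>jj<length \<alpha>. if \<alpha> ! jj then jj + 1 else 0))"

definition A_r :: "nat \<Rightarrow> (nat \<Rightarrow> 'a::ring_1) \<Rightarrow> ((nat \<Rightarrow> nat) \<Rightarrow> 'a) \<Rightarrow> (nat \<Rightarrow> 'a)
                  \<Rightarrow> nat list \<Rightarrow> nat \<Rightarrow> 'a" where
  "A_r l x s c A r =
     (\<Sum>\<alpha>\<in>even_alphas (length A).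
        of_int (tau \<alpha>) * (h_elt l x A r \<alpha> * s (cycle_of_list A) * c_alpha c A \<alpha>))"

end

theory Submission
  imports Defs
begin

text \<open>Rotating A is matched by rotating alpha, and the identity then holds summand by summand;
  the cycle sigma_A is unchanged. Write A = B @ [z] and alpha = beta @ [b], so that
  (-1)^b = (-1)^|beta|. The signed variables eps_j x_(i_j) of the rotated pair are those of
  (A, alpha), each multiplied by (-1)^b, with the variable of z moved to the front. Since the x_i
  commute, h_r is the complete homogeneous polynomial of degree N = (a-1)(l-1)+r in these
  variables: it is invariant under the move and picks up ((-1)^b)^N from the signs. Moving c_z
  past the other factors of c_alpha costs (-1)^|beta| = (-1)^b, and comparing the two tau's shows
  that the total sign is 1 exactly because (a-1)l+r is even.\<close>

lemma power_of_int_mult: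
  fixes y :: "'a::ring_1"
  shows "(of_int k * y) ^ n = of_int (k ^ n) * y ^ n"
proof (induction n)
  case (Suc n)
  have "(of_int k * y) ^ Suc n = of_int k * (y * (of_int (k ^ n) * y ^ n))"
    by (simp only: power_Suc Suc mult.assoc)
  also have "y * (of_int (k ^ n) * y ^ n) = of_int (k ^ n) * (y * y ^ n)"
    by (metis mult.assoc mult_of_int_commute)
  finally show ?case
    by (simp only: power_Suc of_int_mult mult.assoc)
qed simp

lemma of_int_mult_mult:
  fixes u v :: "'a::ring_1"
  shows "(of_int a * u) * (of_int b * v) = of_int (a * b) * (u * v)"
proof -
  have "u * (of_int b * v) = of_int b * (u * v)"
    by (simp only: mult.assoc[symmetric] mult_of_int_commute[of b u, symmetric])
  then show ?thesis
    by (simp only: mult.assoc of_int_mult)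
qed

lemma commute_of_int_mult:
  fixes u v :: "'a::ring_1"
  assumes "u * v = v * u"
  shows "(of_int a * u) * (of_int b * v) = (of_int b * v) * (of_int a * u)"
  by (simp only: of_int_mult_mult assms mult.commute[of a b])

lemma commute_powers:
  fixes x y :: "'a::monoid_mult"
  assumes "x * y = y * x"
  shows "x ^ m * y ^ n = y ^ n * x ^ m"
  by (metis assms power_commuting_commutes)

lemma commute_prod_list:
  fixes w :: "'a::ring_1"
  assumes "\<forall>u\<in>set us. w * u = u * w"
  shows "w * prod_list us = prod_list us * w"
  using assms
proof (induction us)
  case (Cons u us)
  have "w * prod_list (u # us) = (w * u) * prod_list us"
    by (simp add: mult.assoc)
  also have "\<dots> = u * (w * prod_list us)"
    using Cons.prems by (simp add: mult.assoc)
  also have "\<dots> = u * (prod_list us * w)"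
    using Cons by simp
  finally show ?case
    by (simp add: mult.assoc)
qed simp

lemma commute_prod_list_signed:
  fixes w :: "'a::ring_1"
  assumes "\<forall>u\<in>set us. w * f u = of_int (g u) * (f u * w)"
  shows "w * prod_list (map f us) = of_int (prod_list (map g us)) * (prod_list (map f us) * w)"
  using assms
proof (induction us)
  case (Cons u us)
  let ?P = "prod_list (map f us)" and ?G = "prod_list (map g us)"
  have "w * prod_list (map f (u # us)) = of_int (g u) * (f u * (w * ?P))"
    using Cons.prems by (simp flip: mult.assoc)
  also have "\<dots> = of_int (g u) * (f u * (of_int ?G * (?P * w)))"
    using Cons by simp
  also have "f u * (of_int ?G * (?P * w)) = of_int ?G * (f u * ?P * w)"
    by (metis mult.assoc mult_of_int_commute)
  finally show ?case
    by (simp only: list.map prod_list.Cons of_int_mult mult.assoc)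
qed simp

lemma sum_rotate1_reindex:
  assumes "\<And>xs. rotate1 xs \<in> S \<longleftrightarrow> xs \<in> S"
  shows "(\<Sum>xs\<in>S. f (rotate1 xs)) = sum f S"
proof -
  have "rotate1 ` S = S"
  proof (intro subset_antisym subsetI)
    fix xs assume "xs \<in> S"
    moreover obtain ys where "xs = rotate1 ys"
      using surj_rotate1 by (metis surjD)
    ultimately show "xs \<in> rotate1 ` S"
      using assms by blast
  qed (use assms in auto)
  then have "bij_betw rotate1 S S"
    using bij_betw_subset[OF bij_rotate1] by blast
  then show ?thesis by (rule sum.reindex_bij_betw)
qed

definition complete_homogeneous :: "'a::ring_1 list \<Rightarrow> nat \<Rightarrow> 'a" where
  "complete_homogeneous ys N =
     (\<Sum>rs\<in>{rs. length rs = length ys \<and> sum_list rs = N}. prod_list (map2 (^) ys rs))"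

lemma prod_list_map2_power_rotate:
  fixes y :: "'a::ring_1"
  assumes "\<forall>u\<in>set ys. y * u = u * y" and "length ks = length ys"
  shows "prod_list (map2 (^) (ys @ [y]) (ks @ [k])) = prod_list (map2 (^) (y # ys) (k # ks))"
proof -
  have "\<forall>u\<in>set (map2 (^) ys ks). y ^ k * u = u * y ^ k"
    using assms(1) by (auto elim!: in_set_zipE intro: commute_powers)
  then have "y ^ k * prod_list (map2 (^) ys ks) = prod_list (map2 (^) ys ks) * y ^ k"
    by (rule commute_prod_list)
  then show ?thesis
    using assms(2) by simp
qed

lemma complete_homogeneous_rotate:
  fixes y :: "'a::ring_1"
  assumes "\<forall>u\<in>set ys. y * u = u * y"
  shows "complete_homogeneous (y # ys) N = complete_homogeneous (ys @ [y]) N"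
proof -
  let ?R = "{rs. length rs = length (y # ys) \<and> sum_list rs = N}"
  have "rotate1 rs \<in> ?R \<longleftrightarrow> rs \<in> ?R" for rs :: "nat list"
    by (cases rs) (simp_all add: add.commute)
  then have "complete_homogeneous (ys @ [y]) N
      = (\<Sum>rs\<in>?R. prod_list (map2 (^) (ys @ [y]) (rotate1 rs)))"
    unfolding complete_homogeneous_def by (subst sum_rotate1_reindex) simp_all
  also have "\<dots> = complete_homogeneous (y # ys) N"
    unfolding complete_homogeneous_def
  proof (rule sum.cong)
    fix rs assume "rs \<in> ?R"
    then obtain k ks where "rs = k # ks" and "length ks = length ys"
      by (cases rs) auto
    then show "prod_list (map2 (^) (ys @ [y]) (rotate1 rs)) = prod_list (map2 (^) (y # ys) rs)"
      using prod_list_map2_power_rotate[OF assms] by simp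
  qed simp
  finally show ?thesis ..
qed

lemma prod_list_map2_scale:
  fixes ys :: "'a::ring_1 list"
  assumes "length rs = length ys"
  shows "prod_list (map2 (^) (map ((*) (of_int k)) ys) rs)
       = of_int (k ^ sum_list rs) * prod_list (map2 (^) ys rs)"
  using assms
proof (induction ys arbitrary: rs)
  case (Cons y ys)
  then obtain n ns where rs: "rs = n # ns" and len: "length ns = length ys"
    by (cases rs) auto
  let ?P = "prod_list (map2 (^) ys ns)"
  have "prod_list (map2 (^) (map ((*) (of_int k)) (y # ys)) rs)
      = of_int (k ^ n) * (y ^ n * (of_int (k ^ sum_list ns) * ?P))"
    using Cons.IH[OF len] by (simp add: rs power_of_int_mult mult.assoc)
  also have "y ^ n * (of_int (k ^ sum_list ns) * ?P) = of_int (k ^ sum_list ns) * (y ^ n * ?P)"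
    by (metis mult.assoc mult_of_int_commute)
  finally show ?case
    by (simp add: rs power_add mult.assoc)
qed simp

lemma complete_homogeneous_scale:
  "complete_homogeneous (map ((*) (of_int k)) ys) N = of_int (k ^ N) * complete_homogeneous ys N"
  unfolding complete_homogeneous_def sum_distrib_left
  by (rule sum.cong) (simp_all add: prod_list_map2_scale)

definition signed_variables :: "(nat \<Rightarrow> 'a::ring_1) \<Rightarrow> nat list \<Rightarrow> bool list \<Rightarrow> 'a list" where
  "signed_variables x A \<alpha> = map (\<lambda>j. of_int (eps \<alpha> j) * x (A ! j)) [0..<length A]"

lemma map2_power_map_upt:
  "length rs = n \<Longrightarrow> map2 (^) (map f [0..<n]) rs = map (\<lambda>j. f j ^ (rs ! j)) [0..<n]"
  by (intro nth_equalityI) simp_all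

lemma h_elt_eq_complete_homogeneous:
  "h_elt l x A r \<alpha>
     = complete_homogeneous (signed_variables x A \<alpha>) ((length A - 1) * (l - 1) + r)"
  unfolding h_elt_def complete_homogeneous_def signed_variables_def
  by (rule sum.cong) (simp_all add: map2_power_map_upt)

lemma signed_variables_Cons:
  "signed_variables x (z # B) (b # bs)
     = x z # map ((*) (of_int (if b then -1 else 1))) (signed_variables x B bs)"
proof -
  have "eps (b # bs) (Suc j) = (if b then -1 else 1) * eps bs j" for j
    by (simp add: eps_def wt_def)
  moreover have "eps (b # bs) 0 = 1"
    by (simp add: eps_def wt_def)
  ultimately show ?thesis
    unfolding signed_variables_def
    by (simp add: upt_conv_Cons map_Suc_upt[symmetric] mult.assoc del: upt_Suc)
qed

lemma signed_variables_snoc: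
  assumes "length bs = length B"
  shows "signed_variables x (B @ [z]) (bs @ [b])
     = signed_variables x B bs @ [of_int ((-1) ^ wt bs) * x z]"
proof -
  have "eps (bs @ [b]) j = eps bs j" if "j \<le> length bs" for j
    using that by (simp add: eps_def)
  moreover have "eps bs (length bs) = (-1) ^ wt bs"
    by (simp add: eps_def)
  ultimately show ?thesis
    using assms unfolding signed_variables_def by (simp add: nth_append)
qed

lemma h_elt_rotate:
  fixes x :: "nat \<Rightarrow> 'a::ring_1"
  assumes xcomm: "\<forall>j\<in>set B. x z * x j = x j * x z"
    and len: "length bs = length B" and par: "even (wt (bs @ [b]))"
  shows "h_elt l x (z # B) r (b # bs)
     = of_int ((if b then -1 else 1) ^ (length B * (l - 1) + r)) * h_elt l x (B @ [z]) r (bs @ [b])"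
proof -
  define sg :: int where "sg = (if b then -1 else 1)"
  define N where "N = length B * (l - 1) + r"
  define ys where "ys = signed_variables x B bs"
  define y where "y = of_int sg * x z"
  have sg_wt: "(-1) ^ wt bs = sg"
    using par by (simp add: sg_def wt_def)
  have "of_int sg * y = x z"
    unfolding y_def mult.assoc[symmetric] of_int_mult[symmetric] by (simp add: sg_def)
  then have rot: "signed_variables x (z # B) (b # bs) = map ((*) (of_int sg)) (y # ys)"
    by (simp add: signed_variables_Cons ys_def sg_def)
  have snoc: "signed_variables x (B @ [z]) (bs @ [b]) = ys @ [y]"
    using len by (simp add: signed_variables_snoc sg_wt ys_def y_def)
  have "\<forall>u\<in>set ys. y * u = u * y"
  proof
    fix u assume "u \<in> set ys"
    then obtain j where "j < length B" and u: "u = of_int (eps bs j) * x (B ! j)"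
      by (auto simp: ys_def signed_variables_def)
    then have "x z * x (B ! j) = x (B ! j) * x z"
      using xcomm by simp
    then show "y * u = u * y"
      unfolding u y_def by (rule commute_of_int_mult)
  qed
  then have ch_rot: "complete_homogeneous (y # ys) N = complete_homogeneous (ys @ [y]) N"
    by (rule complete_homogeneous_rotate)
  have "h_elt l x (z # B) r (b # bs) = complete_homogeneous (map ((*) (of_int sg)) (y # ys)) N"
    by (simp add: h_elt_eq_complete_homogeneous rot N_def)
  also have "\<dots> = of_int (sg ^ N) * complete_homogeneous (ys @ [y]) N"
    by (simp only: complete_homogeneous_scale ch_rot)
  also have "\<dots> = of_int (sg ^ N) * h_elt l x (B @ [z]) r (bs @ [b])"
    by (simp add: h_elt_eq_complete_homogeneous snoc N_def)
  finally show ?thesis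
    unfolding sg_def N_def .
qed

lemma c_alpha_eq_prod_list_zip:
  assumes "length \<alpha> = length A"
  shows "c_alpha c A \<alpha> = prod_list (map (\<lambda>(b, i). if b then c i else 1) (zip \<alpha> A))"
proof -
  have "zip \<alpha> A = map (\<lambda>j. (\<alpha> ! j, A ! j)) [0..<length A]"
    using assms by (intro nth_equalityI) simp_all
  then show ?thesis
    unfolding c_alpha_def by (simp add: comp_def)
qed

lemma prod_list_signs_zip:
  assumes "length bs = length B"
  shows "prod_list (map (\<lambda>(b, i). if b then -1 else 1) (zip bs B)) = (-1 :: int) ^ wt bs"
  using assms by (induction bs B rule: list_induct2) (simp_all add: wt_def)

lemma c_alpha_rotate:
  fixes c :: "nat \<Rightarrow> 'a::ring_1"
  assumes anti: "\<forall>j\<in>set B. c z * c j = - (c j * c z)"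
    and len: "length bs = length B" and par: "even (wt (bs @ [b]))"
  shows "c_alpha c (z # B) (b # bs) = of_int (if b then -1 else 1) * c_alpha c (B @ [z]) (bs @ [b])"
proof -
  define C where "C = prod_list (map (\<lambda>(b, i). if b then c i else 1) (zip bs B))"
  have cons: "c_alpha c (z # B) (b # bs) = (if b then c z else 1) * C"
    using len by (simp add: c_alpha_eq_prod_list_zip C_def)
  have snoc: "c_alpha c (B @ [z]) (bs @ [b]) = C * (if b then c z else 1)"
    using len by (simp add: c_alpha_eq_prod_list_zip C_def)
  show ?thesis
  proof (cases b)
    case True
    have "\<forall>u\<in>set (zip bs B). c z * (case u of (b, i) \<Rightarrow> if b then c i else 1)
        = of_int (case u of (b, i) \<Rightarrow> if b then -1 else 1) * ((case u of (b, i) \<Rightarrow> if b then c i else 1) * c z)"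
      using anti by (auto elim!: in_set_zipE)
    then have "c z * C
        = of_int (prod_list (map (\<lambda>(b, i). if b then -1 else 1) (zip bs B))) * (C * c z)"
      unfolding C_def by (rule commute_prod_list_signed)
    then have "c z * C = of_int ((-1) ^ wt bs) * (C * c z)"
      by (simp only: prod_list_signs_zip[OF len])
    moreover have "odd (wt bs)"
      using par True by (simp add: wt_def)
    ultimately show ?thesis
      unfolding cons snoc using True by simp
  qed (unfold cons snoc, simp)
qed

lemma tau_rotate:
  "tau (b # bs) = (-1) ^ (wt bs + (if b then length bs else 0)) * tau (bs @ [b])"
proof -
  define m where "m = length bs"
  define T where "T = (\<Sum>j<m. if bs ! j then j + 1 else 0)"
  define W where "W = wt (bs @ [b]) div 2"
  have "(\<Sum>j<m. if bs ! j then 1 else 0) = wt bs"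
    unfolding m_def wt_def by (induction bs rule: rev_induct) (simp_all add: nth_append)
  moreover have "(\<Sum>j<m. if bs ! j then Suc j + 1 else 0)
      = T + (\<Sum>j<m. if bs ! j then 1 else 0)"
    unfolding T_def sum.distrib[symmetric] by (rule sum.cong) simp_all
  ultimately have "(\<Sum>j<length (b # bs). if (b # bs) ! j then j + 1 else 0)
      = (if b then 1 else 0) + T + wt bs"
    unfolding m_def length_Cons sum.lessThan_Suc_shift by (simp add: add.assoc)
  then have cons: "tau (b # bs) = (-1) ^ (W + (if b then 1 else 0) + T + wt bs)"
    unfolding tau_def W_def by (simp add: wt_def add.assoc)
  have snoc: "tau (bs @ [b]) = (-1) ^ (W + T + (if b then m + 1 else 0))"
    unfolding tau_def W_def T_def m_def by (simp add: nth_append add.assoc)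
  have "(-1 :: int) ^ (W + (if b then 1 else 0) + T + wt bs)
      = (-1) ^ (W + (if b then 1 else 0) + T + wt bs + 2 * (if b then m else 0))"
    by (simp add: power_add power_mult)
  also have "W + (if b then 1 else 0) + T + wt bs + 2 * (if b then m else 0)
      = (wt bs + (if b then m else 0)) + (W + T + (if b then m + 1 else 0))"
    by simp
  finally show ?thesis
    unfolding cons snoc m_def by (simp only: power_add)
qed

definition A_r_alpha :: "nat \<Rightarrow> (nat \<Rightarrow> 'a::ring_1) \<Rightarrow> ((nat \<Rightarrow> nat) \<Rightarrow> 'a) \<Rightarrow> (nat \<Rightarrow> 'a)
                          \<Rightarrow> nat list \<Rightarrow> nat \<Rightarrow> bool list \<Rightarrow> 'a" where
  "A_r_alpha l x s c A r \<alpha> = h_elt l x A r \<alpha> * s (cycle_of_list A) * c_alpha c A \<alpha>"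

lemma A_r_eq_sum_A_r_alpha:
  "A_r l x s c A r = (\<Sum>\<alpha>\<in>even_alphas (length A). of_int (tau \<alpha>) * A_r_alpha l x s c A r \<alpha>)"
  unfolding A_r_def A_r_alpha_def ..

lemma A_r_alpha_rotate:
  fixes x :: "nat \<Rightarrow> 'a::ring_1" and s :: "(nat \<Rightarrow> nat) \<Rightarrow> 'a" and c :: "nat \<Rightarrow> 'a"
  assumes xcomm: "\<forall>j\<in>set B. x z * x j = x j * x z"
    and anti: "\<forall>j\<in>set B. c z * c j = - (c j * c z)" and dist: "distinct (z # B)"
    and len: "length bs = length B" and par: "even (wt (bs @ [b]))"
  shows "A_r_alpha l x s c (z # B) r (b # bs)
     = of_int ((if b then -1 else 1) ^ (length B * (l - 1) + r) * (if b then -1 else 1))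
         * A_r_alpha l x s c (B @ [z]) r (bs @ [b])"
proof -
  let ?sg = "if b then -1 else 1 :: int" and ?N = "length B * (l - 1) + r"
    and ?H = "h_elt l x (B @ [z]) r (bs @ [b])" and ?S = "s (cycle_of_list (B @ [z]))"
    and ?C = "c_alpha c (B @ [z]) (bs @ [b])"
  have "cycle_of_list (z # B) = cycle_of_list (B @ [z])"
    using cycle_of_list_rotate_independent[OF dist, of 1] by simp
  then have "A_r_alpha l x s c (z # B) r (b # bs) = (of_int (?sg ^ ?N) * ?H) * ?S * (of_int ?sg * ?C)"
    unfolding A_r_alpha_def h_elt_rotate[OF xcomm len par] c_alpha_rotate[OF anti len par]
    by simp
  also have "\<dots> = of_int (?sg ^ ?N * ?sg) * (?H * ?S * ?C)"
    by (simp only: mult.assoc[of "of_int (?sg ^ ?N)"] of_int_mult_mult)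
  finally show ?thesis
    unfolding A_r_alpha_def .
qed

lemma tau_rotate_sign:
  assumes "even (wt (bs @ [b]))" and "l \<ge> 1" and "even (length bs * l + r)"
  shows "tau (b # bs) * ((if b then -1 else 1) ^ (length bs * (l - 1) + r) * (if b then -1 else 1))
     = tau (bs @ [b])"
proof -
  define N where "N = length bs * (l - 1) + r"
  have "(-1) ^ (wt bs + (if b then length bs else 0)) * ((if b then -1 else 1) ^ N * (if b then -1 else 1))
      = (1 :: int)"
  proof (cases b)
    case True
    have "N + length bs = length bs * l + r"
      unfolding N_def using \<open>l \<ge> 1\<close> by (cases l) auto
    then have "even (N + length bs)"
      using assms(3) by simp
    moreover have "odd (wt bs)"
      using assms(1) True by (simp add: wt_def)
    ultimately have "even (wt bs + length bs + N + 1)"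
      by presburger
    then show ?thesis
      using True by (simp add: power_add[symmetric] flip: power_Suc2)
  next
    case False
    then show ?thesis
      using assms(1) by (simp add: wt_def)
  qed
  then show ?thesis
    unfolding tau_rotate[of b bs] N_def by (metis mult.assoc mult.commute mult_1_left)
qed

lemma A_r_rotate:
  fixes x :: "nat \<Rightarrow> 'a::ring_1" and s :: "(nat \<Rightarrow> nat) \<Rightarrow> 'a" and c :: "nat \<Rightarrow> 'a"
  assumes xcomm: "\<forall>j\<in>set B. x z * x j = x j * x z"
    and anti: "\<forall>j\<in>set B. c z * c j = - (c j * c z)"
    and dist: "distinct (z # B)" and "l \<ge> 1" and "even (length B * l + r)"
  shows "A_r l x s c (z # B) r = A_r l x s c (B @ [z]) r"
proof -
  define E where "E = even_alphas (Suc (length B))"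
  have "of_int (tau \<alpha>) * A_r_alpha l x s c (z # B) r \<alpha>
      = of_int (tau (rotate1 \<alpha>)) * A_r_alpha l x s c (B @ [z]) r (rotate1 \<alpha>)" if "\<alpha> \<in> E" for \<alpha>
  proof -
    have "length \<alpha> = Suc (length B)"
      using that by (simp add: E_def even_alphas_def)
    then obtain b bs where \<alpha>: "\<alpha> = b # bs" and len: "length bs = length B"
      by (cases \<alpha>) auto
    have par: "even (wt (bs @ [b]))"
      using that by (auto simp: \<alpha> E_def even_alphas_def wt_def split: if_splits)
    let ?sg = "if b then -1 else 1 :: int" and ?N = "length B * (l - 1) + r"
    have "of_int (tau \<alpha>) * A_r_alpha l x s c (z # B) r \<alpha>
        = of_int (tau (b # bs)) * (of_int (?sg ^ ?N * ?sg) * A_r_alpha l x s c (B @ [z]) r (bs @ [b]))"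
      unfolding \<alpha> A_r_alpha_rotate[OF xcomm anti dist len par] ..
    also have "\<dots> = of_int (tau (b # bs) * (?sg ^ ?N * ?sg)) * A_r_alpha l x s c (B @ [z]) r (bs @ [b])"
      by (simp only: of_int_mult mult.assoc)
    also have "tau (b # bs) * (?sg ^ ?N * ?sg) = tau (bs @ [b])"
      using tau_rotate_sign[OF par \<open>l \<ge> 1\<close>] len \<open>even (length B * l + r)\<close> by simp
    finally show ?thesis
      unfolding \<alpha> by simp
  qed
  then have "(\<Sum>\<alpha>\<in>E. of_int (tau \<alpha>) * A_r_alpha l x s c (z # B) r \<alpha>)
      = (\<Sum>\<alpha>\<in>E. of_int (tau (rotate1 \<alpha>)) * A_r_alpha l x s c (B @ [z]) r (rotate1 \<alpha>))"
    by (rule sum.cong [OF refl])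
  also have "\<dots> = (\<Sum>\<alpha>\<in>E. of_int (tau \<alpha>) * A_r_alpha l x s c (B @ [z]) r \<alpha>)"
  proof (rule sum_rotate1_reindex)
    show "rotate1 \<alpha> \<in> E \<longleftrightarrow> \<alpha> \<in> E" for \<alpha>
      by (cases \<alpha>) (simp_all add: E_def even_alphas_def wt_def)
  qed
  finally show ?thesis
    unfolding A_r_eq_sum_A_r_alpha E_def by simp
qed

theorem mainTheorem4:
  fixes l d r :: nat
    and x :: "nat \<Rightarrow> 'a::ring_1" and s :: "(nat \<Rightarrow> nat) \<Rightarrow> 'a" and c :: "nat \<Rightarrow> 'a"
    and A :: "nat list"
  assumes "l \<ge> 1" and "d \<ge> 1"
    and "sergeev_rels l d x s c"
    and "A \<noteq> []" and "distinct A" and "set A \<subseteq> {1..d}"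
    and "even ((length A - 1) * l + r)"
  shows "A_r l x s c (last A # butlast A) r = A_r l x s c A r"
proof -
  obtain B z where A: "A = B @ [z]"
    using \<open>A \<noteq> []\<close> by (metis append_butlast_last_id)
  have dist: "distinct (z # B)"
    using \<open>distinct A\<close> by (simp add: A)
  have in_range: "z \<in> {1..d}" "set B \<subseteq> {1..d}"
    using \<open>set A \<subseteq> {1..d}\<close> by (simp_all add: A)
  have x_comm: "\<forall>i\<in>{1..d}. \<forall>j\<in>{1..d}. x i * x j = x j * x i"
    using \<open>sergeev_rels l d x s c\<close> unfolding sergeev_rels_def by (elim conjE) assumption
  have c_anti: "\<forall>i\<in>{1..d}. \<forall>j\<in>{1..d}. i \<noteq> j \<longrightarrow> c i * c j = - (c j * c i)"
    using \<open>sergeev_rels l d x s c\<close> unfolding sergeev_rels_def by (elim conjE) assumption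
  have "j \<in> {1..d}" and "z \<noteq> j" if "j \<in> set B" for j
    using that in_range dist by auto
  then have "\<forall>j\<in>set B. x z * x j = x j * x z" and "\<forall>j\<in>set B. c z * c j = - (c j * c z)"
    using x_comm c_anti in_range(1) by blast+
  moreover have "even (length B * l + r)"
    using \<open>even ((length A - 1) * l + r)\<close> by (simp add: A)
  ultimately have "A_r l x s c (z # B) r = A_r l x s c (B @ [z]) r"
    using A_r_rotate dist \<open>l \<ge> 1\<close> by blast
  then show ?thesis
    by (simp add: A)
qed

end
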